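(* Let $w:\mathbb R^2\to\mathbb R^2$ be any function and $c>0$ a constant such that \[\langle x-y,w(x)-w(y)\rangle>c\,\|w(x)-w(y)\|\] for all $x,y\in\mathbb R^2$ with $\|x-y\|>1$. Put $a:=\min\{c/2,1/2\}$. Then for all $x,y\in\mathbb R^2$ with $\|x-y\|>1$, \[\langle x-y,\,w(x)-w(y)\rangle\ \ge\ a\,\|x-y\|\,\|w(x)-w(y)\| ,\] i.e. the angle between $w(x)-w(y)$ and $x-y$ is at most $\arccos a$ whenever $w(x)\ne w(y)$.
   Context: $\langle\cdot,\cdot\rangle$ and $\|\cdot\|$ denote the standard inner product and Euclidean norm on $\mathbb R^2$. *)

theory Defs
  imports "HOL-Analysis.Analysis"
begin

end

theory Submission imports Defs begin

text \<open>
  Cut the segment from y to x into k equal steps v with \<open>norm v > 1\<close> and \<open>2 * k \<ge> norm (x - y)\<close>.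
  Each increment of w along v lies in the cone \<open>{q. c * norm q \<le> v \<bullet> q}\<close>, which is closed
  under addition by the triangle inequality; hence so does the total increment \<open>w x - w y\<close>, and
  multiplying by k yields the constant c/2. Neither the dimension nor the cap 1/2 plays a role.
\<close>

lemma inner_increment_ge_iterate:
  fixes w :: "'a::real_inner \<Rightarrow> 'a"
  assumes "0 \<le> c" and step: "\<And>t. c * norm (w (t + v) - w t) \<le> v \<bullet> (w (t + v) - w t)"
  shows "c * norm (w (y + real k *\<^sub>R v) - w y) \<le> v \<bullet> (w (y + real k *\<^sub>R v) - w y)"
proof (induction k)
  case 0
  then show ?case by simp
next
  case (Suc k)
  define t where "t = y + real k *\<^sub>R v"
  have t_step: "y + real (Suc k) *\<^sub>R v = t + v"
    by (simp add: t_def algebra_simps)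
  have "c * norm (w (t + v) - w y) \<le> c * norm (w (t + v) - w t) + c * norm (w t - w y)"
    using norm_triangle_sub[of "w (t + v) - w y" "w t - w y"] \<open>0 \<le> c\<close>
    by (simp add: distrib_left[symmetric] mult_left_mono)
  also have "\<dots> \<le> v \<bullet> (w (t + v) - w t) + v \<bullet> (w t - w y)"
    using step[of t] Suc.IH by (simp add: t_def)
  also have "\<dots> = v \<bullet> (w (t + v) - w y)"
    by (simp add: inner_diff_right)
  finally show ?case
    unfolding t_step .
qed

lemma exists_nat_half_le_less:
  fixes L :: real
  assumes "1 < L"
  shows "\<exists>k::nat. 0 < k \<and> L \<le> 2 * real k \<and> real k < L"
proof (cases "L \<le> 2")
  case True
  then show ?thesis
    using assms by (intro exI[of _ 1]) simp
next
  case False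
  have "real (nat \<lceil>L / 2\<rceil>) = of_int \<lceil>L / 2\<rceil>"
    using assms by simp
  then show ?thesis
    using False ceiling_correct[of "L / 2"] by (intro exI[of _ "nat \<lceil>L / 2\<rceil>"]) linarith
qed

lemma inner_diff_ge_half_norm_mult:
  fixes w :: "'a::real_inner \<Rightarrow> 'a"
  assumes "0 \<le> c"
    and cone: "\<And>x y. 1 < norm (x - y) \<Longrightarrow> c * norm (w x - w y) \<le> (x - y) \<bullet> (w x - w y)"
    and far: "1 < norm (x - y)"
  shows "c / 2 * norm (x - y) * norm (w x - w y) \<le> (x - y) \<bullet> (w x - w y)"
proof -
  obtain k :: nat where "0 < k" and k_ge: "norm (x - y) \<le> 2 * real k" and k_less: "real k < norm (x - y)"
    using exists_nat_half_le_less[OF far] by blast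
  define v where "v = (1 / real k) *\<^sub>R (x - y)"
  have x_eq: "x = y + real k *\<^sub>R v"
    using \<open>0 < k\<close> by (simp add: v_def)
  have "1 < norm v"
    using \<open>0 < k\<close> k_less by (simp add: v_def)
  then have "c * norm (w (t + v) - w t) \<le> v \<bullet> (w (t + v) - w t)" for t
    using cone[of "t + v" t] by simp
  from inner_increment_ge_iterate[where w = w and v = v, OF \<open>0 \<le> c\<close> this, of y k]
  have "c * norm (w x - w y) \<le> v \<bullet> (w x - w y)"
    by (simp add: x_eq)
  then have "real k * (c * norm (w x - w y)) \<le> (x - y) \<bullet> (w x - w y)"
    by (simp add: x_eq mult_left_mono)
  moreover have "c / 2 * norm (x - y) * norm (w x - w y) = norm (x - y) / 2 * (c * norm (w x - w y))"
    by simp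
  moreover have "\<dots> \<le> real k * (c * norm (w x - w y))"
    using k_ge \<open>0 \<le> c\<close> by (intro mult_right_mono) auto
  ultimately show ?thesis
    by linarith
qed

theorem mainTheorem5:
  fixes w :: "real^2 \<Rightarrow> real^2" and c :: real
  assumes "c > 0"
    and "\<And>x y. norm (x - y) > 1 \<Longrightarrow> (x - y) \<bullet> (w x - w y) > c * norm (w x - w y)"
  shows "\<forall>x y. norm (x - y) > 1 \<longrightarrow>
           (x - y) \<bullet> (w x - w y) \<ge> min (c/2) (1/2) * norm (x - y) * norm (w x - w y)"
proof (intro allI impI)
  fix x y :: "real^2"
  assume far: "norm (x - y) > 1"
  have cone: "c * norm (w x' - w y') \<le> (x' - y') \<bullet> (w x' - w y')" if "1 < norm (x' - y')" for x' y'
    using assms(2)[OF that] by simp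
  have "min (c/2) (1/2) * norm (x - y) * norm (w x - w y) \<le> c / 2 * norm (x - y) * norm (w x - w y)"
    by (intro mult_right_mono) auto
  also have "\<dots> \<le> (x - y) \<bullet> (w x - w y)"
    using inner_diff_ge_half_norm_mult[of c w, OF _ cone far] assms(1) by simp
  finally show "(x - y) \<bullet> (w x - w y) \<ge> min (c/2) (1/2) * norm (x - y) * norm (w x - w y)" .
qed

end
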